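(* There exists a persuasion instance (with a single world, a single type consisting of two agents, two actions, and $d=1$) such that for every representative set $\bar{\mathcal A}$, no optimal private policy is supported only on representative joint actions; that is, every stable private policy $\sigma:\Omega\to\Delta(\bar{\mathcal A}\times G)$ achieves strictly smaller principal utility than some stable private policy $\sigma':\Omega\to\Delta(\mathcal A\times G')$.
   Context: A persuasion instance consists of: a finite set $\Omega$ of worlds; a prior $\mu\in\Delta(\Omega)$; agents $N=\{1,\dots,n\}$; a finite action set $A$; a partition $\mathcal T$ of $N$ into nonempty sets called types; for each $T\in\mathcal T$ a utility $u_T(a,\rho\mid\omega)\in\mathbb R$ defined for $a\in A$, action profiles $\rho$, and $\omega\in\Omega$; a principal utility $u_0(\rho\mid\omega)\in\mathbb R$; and an integer $d\ge 1$ (maximum coalition size). Joint actions are $\mathbf a\in\mathcal A=A^n$; the action profile of $\mathbf a$ is $\rho_{\mathbf a}:\mathcal T\times A\to\mathbb Z_{\ge0}$, $\rho_{\mathbf a}(T,a)=|\{i\in T:a_i=a\}|$. For $i\in T$, $u_i(\mathbf a\mid\omega)=u_T(a_i,\rho_{\mathbf a}\mid\omega)$. A policy is a map $\sigma:\Omega\to\Delta(\mathcal A\times G)$ (finitely supported distributions), where $G$ is a set of tuples $\mathbf g=(g_i)_{i\in N}$; elements $s=(\mathbf a,\mathbf g)$ are meta-signals. In the private mode agent $i$ observes only $s_i=(a_i,g_i)$. Agent $i$'s posterior upon observing $s_i$ is $\Pr(\tilde{\mathbf a},\omega\mid s_i)=\mu(\omega)\,\sigma(\{s'=(\tilde{\mathbf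 a},\mathbf g'):s'_i=s_i\}\mid\omega)\big/\sum_{\omega'}\mu(\omega')\,\sigma(\{s':s'_i=s_i\}\mid\omega')$. A meta-signal $s$ is unstable if there exist a nonempty $N'\subseteq N$ with $|N'|\le d$ and actions $(a'_i)_{i\in N'}$ such that for every $i\in N'$: $\sum_{\tilde{\mathbf a},\omega}\Pr(\tilde{\mathbf a},\omega\mid s_i)\,\big(u_i(\tilde{\mathbf a}\oplus\mathbf a'\mid\omega)-u_i(\tilde{\mathbf a}\mid\omega)\big)>0$, where $\tilde{\mathbf a}\oplus\mathbf a'$ replaces $\tilde a_i$ by $a'_i$ for all $i\in N'$; otherwise $s$ is stable. A policy is stable if every meta-signal it sends with positive probability is stable. The principal's utility is $u_0(\sigma)=\sum_\omega\mu(\omega)\sum_{(\mathbf a,\mathbf g)}\sigma((\mathbf a,\mathbf g)\mid\omega)\,u_0(\rho_{\mathbf a}\mid\omega)$. An optimal private policy is a stable private policy maximizing $u_0$ among all stable private policies. A representative set $\bar{\mathcal A}\subseteq\mathcal A$ contains, for each realizable action profile $\rho$, exactly one $\bar{\mathbf a}$ with $\rho_{\bar{\mathbf a}}=\rho$. *)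

theory Defs
  imports "HOL-Probability.Probability_Mass_Function"
begin

text \<open>Joint actions are lists of length n; meta-signals are pairs
(joint action, list of per-agent extra signals g_i :: nat).\<close>

record ('w, 'a) pinst =
  Omega :: "'w set"
  mu :: "'w \<Rightarrow> real"
  nagents :: nat
  Acts :: "'a set"
  Types :: "nat set set"
  uT :: "nat set \<Rightarrow> 'a \<Rightarrow> (nat set \<Rightarrow> 'a \<Rightarrow> nat) \<Rightarrow> 'w \<Rightarrow> real"
  u0 :: "(nat set \<Rightarrow> 'a \<Rightarrow> nat) \<Rightarrow> 'w \<Rightarrow> real"
  dmax :: nat

definition valid_instance :: "('w, 'a) pinst \<Rightarrow> bool" where
  "valid_instance I \<longleftrightarrow>
     finite (Omega I) \<and> Omega I \<noteq> {} \<and> (\<forall>\<omega>\<in>Omega I. mu I \<omega> \<ge> 0) \<and>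
     (\<Sum>\<omega>\<in>Omega I. mu I \<omega>) = 1 \<and>
     nagents I \<ge> 1 \<and> finite (Acts I) \<and> Acts I \<noteq> {} \<and>
     (\<forall>T\<in>Types I. T \<noteq> {}) \<and> \<Union>(Types I) = {0..<nagents I} \<and>
     (\<forall>T\<in>Types I. \<forall>T'\<in>Types I. T \<noteq> T' \<longrightarrow> T \<inter> T' = {}) \<and>
     dmax I \<ge> 1"

definition joint_actions :: "('w, 'a) pinst \<Rightarrow> 'a list set" where
  "joint_actions I = {a. length a = nagents I \<and> set a \<subseteq> Acts I}"

definition type_of :: "('w, 'a) pinst \<Rightarrow> nat \<Rightarrow> nat set" where
  "type_of I i = (THE T. T \<in> Types I \<and> i \<in> T)"

definition profile :: "('w, 'a) pinst \<Rightarrow> 'a list \<Rightarrow> nat set \<Rightarrow> 'a \<Rightarrow> nat" where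
  "profile I a = (\<lambda>T b. if T \<in> Types I \<and> b \<in> Acts I then card {i\<in>T. a ! i = b} else 0)"

definition agent_util :: "('w, 'a) pinst \<Rightarrow> nat \<Rightarrow> 'a list \<Rightarrow> 'w \<Rightarrow> real" where
  "agent_util I i a \<omega> = uT I (type_of I i) (a ! i) (profile I a) \<omega>"

type_synonym 'a msig = "'a list \<times> nat list"

definition is_policy :: "('w, 'a) pinst \<Rightarrow> ('w \<Rightarrow> 'a msig pmf) \<Rightarrow> bool" where
  "is_policy I \<sigma> \<longleftrightarrow> (\<forall>\<omega>\<in>Omega I. finite (set_pmf (\<sigma> \<omega>)) \<and>
      set_pmf (\<sigma> \<omega>) \<subseteq> {(a, g). a \<in> joint_actions I \<and> length g = nagents I})"

definition obs :: "nat \<Rightarrow> 'a msig \<Rightarrow> 'a \<times> nat" where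
  "obs i s = (fst s ! i, snd s ! i)"

definition posterior ::
  "('w, 'a) pinst \<Rightarrow> ('w \<Rightarrow> 'a msig pmf) \<Rightarrow> nat \<Rightarrow> 'a \<times> nat \<Rightarrow> 'a list \<Rightarrow> 'w \<Rightarrow> real" where
  "posterior I \<sigma> i si a \<omega> =
     mu I \<omega> * measure_pmf.prob (\<sigma> \<omega>) {s'. fst s' = a \<and> obs i s' = si} /
     (\<Sum>\<omega>'\<in>Omega I. mu I \<omega>' * measure_pmf.prob (\<sigma> \<omega>') {s'. obs i s' = si})"

definition deviate :: "nat \<Rightarrow> 'a list \<Rightarrow> nat set \<Rightarrow> (nat \<Rightarrow> 'a) \<Rightarrow> 'a list" where
  "deviate n a N' a' = map (\<lambda>j. if j \<in> N' then a' j else a ! j) [0..<n]"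

definition unstable :: "('w, 'a) pinst \<Rightarrow> ('w \<Rightarrow> 'a msig pmf) \<Rightarrow> 'a msig \<Rightarrow> bool" where
  "unstable I \<sigma> s \<longleftrightarrow> (\<exists>N' a'. N' \<subseteq> {0..<nagents I} \<and> N' \<noteq> {} \<and> card N' \<le> dmax I \<and>
     (\<forall>i\<in>N'. a' i \<in> Acts I) \<and>
     (\<forall>i\<in>N'. (\<Sum>a\<in>joint_actions I. \<Sum>\<omega>\<in>Omega I.
         posterior I \<sigma> i (obs i s) a \<omega> *
         (agent_util I i (deviate (nagents I) a N' a') \<omega> - agent_util I i a \<omega>)) > 0))"

definition sent :: "('w, 'a) pinst \<Rightarrow> ('w \<Rightarrow> 'a msig pmf) \<Rightarrow> 'a msig \<Rightarrow> bool" where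
  "sent I \<sigma> s \<longleftrightarrow> (\<Sum>\<omega>\<in>Omega I. mu I \<omega> * pmf (\<sigma> \<omega>) s) > 0"

definition stable_private_policy :: "('w, 'a) pinst \<Rightarrow> ('w \<Rightarrow> 'a msig pmf) \<Rightarrow> bool" where
  "stable_private_policy I \<sigma> \<longleftrightarrow> is_policy I \<sigma> \<and> (\<forall>s. sent I \<sigma> s \<longrightarrow> \<not> unstable I \<sigma> s)"

definition principal_utility :: "('w, 'a) pinst \<Rightarrow> ('w \<Rightarrow> 'a msig pmf) \<Rightarrow> real" where
  "principal_utility I \<sigma> = (\<Sum>\<omega>\<in>Omega I. mu I \<omega> *
      (\<Sum>s\<in>set_pmf (\<sigma> \<omega>). pmf (\<sigma> \<omega>) s * u0 I (profile I (fst s)) \<omega>))"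

definition representative_set :: "('w, 'a) pinst \<Rightarrow> 'a list set \<Rightarrow> bool" where
  "representative_set I Abar \<longleftrightarrow> Abar \<subseteq> joint_actions I \<and>
     (\<forall>a\<in>joint_actions I. \<exists>!b. b \<in> Abar \<and> profile I b = profile I a)"

end

theory Submission imports Defs begin

text \<open>
  In the entry game two agents of one type each either stay out (action 0) or enter (action 1);
  entering pays 1 if the other agent stays out and -1 otherwise, and the principal is paid 1
  exactly when nobody enters. Recommending (0,0), (0,1) and (1,0) with equal probability is
  stable and yields 1/3: an agent told to enter knows the other stays out, and an agent told to
  stay out gives the other even odds of entering, so entering is worth 0 to it.
  The joint actions (0,1) and (1,0) have the same profile, so a representative set omits one of
  them, say (1,0). Under a policy supported on it, an agent 1 told to stay out knows that agent 0
  stays out as well and enters profitably; hence a stable such policy never recommends (0,0) and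
  yields 0.
\<close>

definition deviation_gain ::
  "('w, 'a) pinst \<Rightarrow> ('w \<Rightarrow> 'a msig pmf) \<Rightarrow> 'a msig \<Rightarrow> nat \<Rightarrow> nat set \<Rightarrow> (nat \<Rightarrow> 'a) \<Rightarrow> real" where
  "deviation_gain I \<sigma> s i N' a' =
     (\<Sum>a\<in>joint_actions I. \<Sum>\<omega>\<in>Omega I.
        posterior I \<sigma> i (obs i s) a \<omega> *
        (agent_util I i (deviate (nagents I) a N' a') \<omega> - agent_util I i a \<omega>))"

lemma deviate_singleton: "deviate n a {i} a' = deviate n a {i} (\<lambda>_. a' i)"
  by (simp add: deviate_def)

lemma deviate_singleton_list_update: "length a = n \<Longrightarrow> deviate n a {i} a' = a[i := a' i]"
  by (simp add: deviate_def list_eq_iff_nth_eq nth_list_update)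

lemma deviation_gain_singleton:
  "deviation_gain I \<sigma> s i {i} a' = deviation_gain I \<sigma> s i {i} (\<lambda>_. a' i)"
  by (simp add: deviation_gain_def deviate_singleton[of _ _ i a'])

lemma unstable_iff_unilateral_deviation:
  assumes "dmax I = 1"
  shows "unstable I \<sigma> s \<longleftrightarrow>
    (\<exists>i<nagents I. \<exists>c\<in>Acts I. deviation_gain I \<sigma> s i {i} (\<lambda>_. c) > 0)"
proof
  assume "unstable I \<sigma> s"
  then obtain N' a' where N': "N' \<subseteq> {0..<nagents I}" "N' \<noteq> {}" "card N' \<le> 1"
    and acts: "\<forall>i\<in>N'. a' i \<in> Acts I" and gain: "\<forall>i\<in>N'. deviation_gain I \<sigma> s i N' a' > 0"
    using assms by (auto simp: unstable_def deviation_gain_def)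
  have "finite N'"
    using N'(1) finite_subset by blast
  with N'(2,3) have "card N' = 1"
    by (simp add: le_antisym Suc_leI card_gt_0_iff)
  then obtain i where i: "N' = {i}"
    by (rule card_1_singletonE)
  have "i < nagents I" "a' i \<in> Acts I" "deviation_gain I \<sigma> s i {i} (\<lambda>_. a' i) > 0"
    using N'(1) acts gain deviation_gain_singleton[of I \<sigma> s i a'] by (simp_all add: i)
  then show "\<exists>i<nagents I. \<exists>c\<in>Acts I. deviation_gain I \<sigma> s i {i} (\<lambda>_. c) > 0"
    by blast
next
  assume "\<exists>i<nagents I. \<exists>c\<in>Acts I. deviation_gain I \<sigma> s i {i} (\<lambda>_. c) > 0"
  then obtain i c where "i < nagents I" "c \<in> Acts I" "deviation_gain I \<sigma> s i {i} (\<lambda>_. c) > 0"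
    by blast
  with assms show "unstable I \<sigma> s"
    unfolding unstable_def deviation_gain_def by (intro exI[of _ "{i}"] exI[of _ "\<lambda>_. c"]) auto
qed

lemma posterior_eq_0:
  assumes "\<forall>s'\<in>set_pmf (\<sigma> \<omega>). \<not> (fst s' = a \<and> obs i s' = si)"
  shows "posterior I \<sigma> i si a \<omega> = 0"
  using assms by (simp add: posterior_def measure_pmf_zero_iff disjoint_iff)

lemma posterior_pos:
  assumes I: "valid_instance I" and \<omega>: "\<omega> \<in> Omega I" "mu I \<omega> > 0" and s: "s \<in> set_pmf (\<sigma> \<omega>)"
  shows "posterior I \<sigma> i (obs i s) (fst s) \<omega> > 0"
proof -
  have fin: "finite (Omega I)" and nonneg: "\<And>\<omega>. \<omega> \<in> Omega I \<Longrightarrow> mu I \<omega> \<ge> 0"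
    using I by (auto simp: valid_instance_def)
  have num: "measure_pmf.prob (\<sigma> \<omega>) {s'. fst s' = fst s \<and> obs i s' = obs i s} > 0"
    using s by (intro measure_pmf_posI) auto
  have "mu I \<omega> * measure_pmf.prob (\<sigma> \<omega>) {s'. obs i s' = obs i s} > 0"
    using s \<omega> by (intro mult_pos_pos measure_pmf_posI) auto
  then have den: "(\<Sum>\<omega>'\<in>Omega I. mu I \<omega>' * measure_pmf.prob (\<sigma> \<omega>') {s'. obs i s' = obs i s}) > 0"
    using fin nonneg \<omega>(1) by (intro sum_pos2[where i = \<omega>]) simp_all
  show ?thesis
    unfolding posterior_def using \<omega>(2) num den by simp
qed

lemma sentI:
  assumes I: "valid_instance I" and \<omega>: "\<omega> \<in> Omega I" "mu I \<omega> > 0" and s: "s \<in> set_pmf (\<sigma> \<omega>)"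
  shows "sent I \<sigma> s"
  unfolding sent_def
proof (rule sum_pos2[where i = \<omega>])
  show "0 < mu I \<omega> * pmf (\<sigma> \<omega>) s"
    using \<omega>(2) s by (simp add: pmf_positive)
qed (use I \<omega>(1) in \<open>auto simp: valid_instance_def\<close>)

lemma sentD:
  assumes "sent I \<sigma> s"
  obtains \<omega> where "\<omega> \<in> Omega I" "s \<in> set_pmf (\<sigma> \<omega>)"
proof -
  have "\<exists>\<omega>\<in>Omega I. mu I \<omega> * pmf (\<sigma> \<omega>) s \<noteq> 0"
  proof (rule ccontr)
    assume "\<not> ?thesis"
    then have "(\<Sum>\<omega>\<in>Omega I. mu I \<omega> * pmf (\<sigma> \<omega>) s) = 0"
      by (intro sum.neutral) simp
    with assms show False
      by (simp add: sent_def)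
  qed
  then show thesis
    using that by (auto simp: set_pmf_iff)
qed

lemma is_policy_joint_action:
  assumes "is_policy I \<sigma>" "\<omega> \<in> Omega I" "s \<in> set_pmf (\<sigma> \<omega>)"
  shows "fst s \<in> joint_actions I"
  using assms unfolding is_policy_def by force

lemma representative_set_profile_inj:
  assumes "representative_set I Abar" "a \<in> Abar" "b \<in> Abar" "profile I a = profile I b"
  shows "a = b"
  using assms unfolding representative_set_def by blast

lemma principal_utility_eq_0:
  assumes "\<forall>\<omega>\<in>Omega I. \<forall>s\<in>set_pmf (\<sigma> \<omega>). u0 I (profile I (fst s)) \<omega> = 0"
  shows "principal_utility I \<sigma> = 0"
  using assms by (simp add: principal_utility_def)

definition entry_game :: "(nat, nat) pinst" where
  "entry_game = \<lparr>Omega = {0}, mu = (\<lambda>_. 1), nagents = 2, Acts = {0, 1}, Types = {{0, 1}},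
    uT = (\<lambda>T a \<rho> \<omega>. if a = 1 then (if \<rho> {0, 1} 1 = 1 then 1 else -1) else 0),
    u0 = (\<lambda>\<rho> \<omega>. if \<rho> {0, 1} 1 = 0 then 1 else 0), dmax = 1\<rparr>"

lemma entry_game_simps [simp]:
  "Omega entry_game = {0}" "mu entry_game = (\<lambda>_. 1)" "nagents entry_game = 2"
  "Acts entry_game = {0, 1}" "Types entry_game = {{0, 1}}" "dmax entry_game = 1"
  "uT entry_game = (\<lambda>T a \<rho> \<omega>. if a = 1 then (if \<rho> {0, 1} 1 = 1 then 1 else -1) else 0)"
  "u0 entry_game = (\<lambda>\<rho> \<omega>. if \<rho> {0, 1} 1 = 0 then 1 else 0)"
  by (simp_all add: entry_game_def)

lemma valid_instance_entry_game: "valid_instance entry_game"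
  by (auto simp: valid_instance_def)

lemma joint_actions_entry_game: "joint_actions entry_game = {[0, 0], [0, 1], [1, 0], [1, 1]}"
  by (auto simp: joint_actions_def length_Suc_conv numeral_2_eq_2)

lemma card_filter_pair: "card {i \<in> {0, 1::nat}. P i} = of_bool (P 0) + of_bool (P 1)"
proof -
  have "{i \<in> {0, 1::nat}. P i} = {i. i = 0 \<and> P i} \<union> {i. i = 1 \<and> P i}"
    by blast
  also have "\<dots> = (if P 0 then {0} else {}) \<union> (if P 1 then {1} else {})"
    by auto
  finally show ?thesis
    by simp
qed

lemma profile_entry_game:
  "profile entry_game [x, y] T b =
     (if T = {0, 1} \<and> b \<in> {0, 1} then of_bool (x = b) + of_bool (y = b) else 0)"
proof (cases "T = {0, 1}")
  case True
  show ?thesis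
    unfolding True profile_def by (subst card_filter_pair) simp
qed (simp add: profile_def)

lemma profile_entry_game_swap: "profile entry_game [x, y] = profile entry_game [y, x]"
  unfolding profile_entry_game by (intro ext) (simp only: add.commute)

lemma type_of_entry_game: "i < 2 \<Longrightarrow> type_of entry_game i = {0, 1}"
  unfolding type_of_def by (rule the_equality) auto

lemma agent_util_entry_game:
  "i < 2 \<Longrightarrow> agent_util entry_game i [x, y] \<omega> =
     (if [x, y] ! i = 1 then if x = 1 \<and> y = 1 then -1 else 1 else 0)"
  by (auto simp: agent_util_def type_of_entry_game profile_entry_game less_2_cases_iff)

lemma deviation_gain_entry_game:
  "deviation_gain entry_game \<sigma> s i N' a' =
     (\<Sum>a\<in>{[0, 0], [0, 1], [1, 0], [1, 1]}. posterior entry_game \<sigma> i (obs i s) a 0 *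
        (agent_util entry_game i (deviate 2 a N' a') 0 - agent_util entry_game i a 0))"
  by (simp add: deviation_gain_def joint_actions_entry_game)

definition entry_signals :: "nat msig set" where
  "entry_signals = {([0, 0], [0, 0]), ([0, 1], [0, 0]), ([1, 0], [0, 0])}"

definition entry_policy :: "nat \<Rightarrow> nat msig pmf" where
  "entry_policy = (\<lambda>_. pmf_of_set entry_signals)"

lemma set_pmf_entry_policy [simp]: "set_pmf (entry_policy \<omega>) = entry_signals"
  by (simp add: entry_policy_def entry_signals_def)

lemma posterior_entry_policy:
  "posterior entry_game entry_policy i si a 0 =
     card (entry_signals \<inter> {s. fst s = a \<and> obs i s = si}) / card (entry_signals \<inter> {s. obs i s = si})"
  by (simp add: posterior_def entry_policy_def measure_pmf_of_set entry_signals_def)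

lemma deviation_gain_entry_policy_nonpos:
  assumes "s \<in> entry_signals" "i < 2" "c \<in> {0, 1}"
  shows "deviation_gain entry_game entry_policy s i {i} (\<lambda>_. c) \<le> 0"
proof -
  have "i = 0 \<or> i = 1"
    using assms(2) by linarith
  with assms(1,3) show ?thesis
    unfolding entry_signals_def
    by (elim insertE disjE emptyE; hypsubst;
        simp add: deviation_gain_entry_game posterior_entry_policy deviate_singleton_list_update;
        simp add: entry_signals_def obs_def agent_util_entry_game Int_insert_left)
qed

lemma stable_entry_policy: "stable_private_policy entry_game entry_policy"
  unfolding stable_private_policy_def
proof (intro conjI allI impI)
  show "is_policy entry_game entry_policy"
    by (auto simp: is_policy_def entry_signals_def joint_actions_def)
next
  fix s
  assume "sent entry_game entry_policy s"
  then obtain \<omega> where "s \<in> set_pmf (entry_policy \<omega>)"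
    by (rule sentD)
  then have s: "s \<in> entry_signals"
    by simp
  show "\<not> unstable entry_game entry_policy s"
  proof
    assume "unstable entry_game entry_policy s"
    then obtain i c where "i < 2" "c \<in> {0, 1}"
      and "deviation_gain entry_game entry_policy s i {i} (\<lambda>_. c) > 0"
      by (auto simp: unstable_iff_unilateral_deviation)
    with deviation_gain_entry_policy_nonpos[OF s] show False
      by (meson not_le)
  qed
qed

lemma principal_utility_entry_policy: "principal_utility entry_game entry_policy = 1 / 3"
  by (simp add: principal_utility_def entry_policy_def entry_signals_def profile_entry_game)

lemma no_entry_unstable:
  assumes s: "s \<in> set_pmf (\<sigma> 0)" "fst s = [0, 0]" and i: "i < 2"
    and sure: "\<forall>s'\<in>set_pmf (\<sigma> 0). fst s' ! i = 0 \<longrightarrow> fst s' = [0, 0]"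
  shows "unstable entry_game \<sigma> s"
proof -
  have zero: "posterior entry_game \<sigma> i (obs i s) a 0 = 0" if "a \<noteq> [0, 0]" for a
  proof (rule posterior_eq_0, intro ballI notI)
    fix s'
    assume s': "s' \<in> set_pmf (\<sigma> 0)" and same: "fst s' = a \<and> obs i s' = obs i s"
    have "fst s' ! i = fst s ! i"
      using same by (auto simp: obs_def)
    also have "\<dots> = 0"
      using s(2) i by (auto simp: less_2_cases_iff)
    finally have "fst s' = [0, 0]"
      using sure s' by blast
    with same that show False
      by simp
  qed
  have "posterior entry_game \<sigma> i (obs i s) (fst s) 0 > 0"
    by (rule posterior_pos[OF valid_instance_entry_game]) (use s in simp_all)
  then have pos: "posterior entry_game \<sigma> i (obs i s) [0, 0] 0 > 0"
    using s(2) by simp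
  have payoffs: "agent_util entry_game i (deviate 2 [0, 0] {i} (\<lambda>_. 1)) 0 = 1"
    "agent_util entry_game i [0, 0] 0 = 0"
    using i by (auto simp: less_2_cases_iff agent_util_entry_game deviate_singleton_list_update)
  have "deviation_gain entry_game \<sigma> s i {i} (\<lambda>_. 1) = posterior entry_game \<sigma> i (obs i s) [0, 0] 0"
    by (simp add: deviation_gain_entry_game zero payoffs del: One_nat_def)
      \<comment> \<open>otherwise simp turns \<open>\<lambda>_. 1\<close> into \<open>\<lambda>_. Suc 0\<close> and \<open>payoffs\<close> no longer matches\<close>
  with pos i show ?thesis
    unfolding unstable_iff_unilateral_deviation[OF entry_game_simps(6)] by auto
qed

lemma representative_set_entry_game:
  assumes "representative_set entry_game Abar"
  shows "[0, 1] \<notin> Abar \<or> [1, 0] \<notin> Abar"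
  using representative_set_profile_inj[OF assms] profile_entry_game_swap by fastforce

lemma stable_representative_policy_no_entry:
  assumes st: "stable_private_policy entry_game \<sigma>" and R: "representative_set entry_game Abar"
    and supp: "\<forall>s\<in>set_pmf (\<sigma> 0). fst s \<in> Abar"
  shows "\<forall>s\<in>set_pmf (\<sigma> 0). fst s \<noteq> [0, 0]"
proof (intro ballI notI)
  fix s
  assume s: "s \<in> set_pmf (\<sigma> 0)" "fst s = [0, 0]"
  have actions: "fst s' \<in> {[0, 0], [0, 1], [1, 0], [1, 1]}" if "s' \<in> set_pmf (\<sigma> 0)" for s'
    using is_policy_joint_action[of entry_game \<sigma> 0 s'] st that
    by (simp add: stable_private_policy_def joint_actions_entry_game)
  obtain i where "i < 2" "\<forall>s'\<in>set_pmf (\<sigma> 0). fst s' ! i = 0 \<longrightarrow> fst s' = [0, 0]"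
  proof (cases "[0, 1] \<in> Abar")
    case True
    with representative_set_entry_game[OF R] have "[1, 0] \<notin> Abar"
      by blast
    with supp actions show thesis
      by (intro that[of 1]) fastforce+
  next
    case False
    with supp actions show thesis
      by (intro that[of 0]) fastforce+
  qed
  then have "unstable entry_game \<sigma> s"
    using no_entry_unstable s by blast
  moreover have "sent entry_game \<sigma> s"
    using sentI[OF valid_instance_entry_game] s by simp
  ultimately show False
    using st unfolding stable_private_policy_def by blast
qed

lemma principal_utility_entry_game_eq_0:
  assumes "is_policy entry_game \<sigma>" "\<forall>s\<in>set_pmf (\<sigma> 0). fst s \<noteq> [0, 0]"
  shows "principal_utility entry_game \<sigma> = 0"
proof (rule principal_utility_eq_0, intro ballI)
  fix \<omega> s
  assume "\<omega> \<in> Omega entry_game" "s \<in> set_pmf (\<sigma> \<omega>)"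
  moreover from this have "fst s \<in> joint_actions entry_game"
    by (rule is_policy_joint_action[OF assms(1)])
  ultimately have "fst s \<in> {[0, 1], [1, 0], [1, 1]}"
    using assms(2) by (auto simp: joint_actions_entry_game)
  then show "u0 entry_game (profile entry_game (fst s)) \<omega> = 0"
    by (auto simp: profile_entry_game)
qed

theorem proposition1:
  shows "\<exists>I :: (nat, nat) pinst.
    valid_instance I \<and> card (Omega I) = 1 \<and> nagents I = 2 \<and> Types I = {{0, 1}} \<and>
    card (Acts I) = 2 \<and> dmax I = 1 \<and>
    (\<forall>Abar. representative_set I Abar \<longrightarrow>
      (\<forall>\<sigma>. stable_private_policy I \<sigma> \<and> (\<forall>\<omega>\<in>Omega I. \<forall>s\<in>set_pmf (\<sigma> \<omega>). fst s \<in> Abar) \<longrightarrow>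
        (\<exists>\<sigma>'. stable_private_policy I \<sigma>' \<and> principal_utility I \<sigma> < principal_utility I \<sigma>')))"
proof (intro exI[of _ entry_game] conjI allI impI)
  fix Abar \<sigma>
  assume R: "representative_set entry_game Abar"
    and H: "stable_private_policy entry_game \<sigma> \<and>
      (\<forall>\<omega>\<in>Omega entry_game. \<forall>s\<in>set_pmf (\<sigma> \<omega>). fst s \<in> Abar)"
  then have "principal_utility entry_game \<sigma> = 0"
    using stable_representative_policy_no_entry[OF _ R]
    by (intro principal_utility_entry_game_eq_0) (auto simp: stable_private_policy_def)
  then show "\<exists>\<sigma>'. stable_private_policy entry_game \<sigma>' \<and>
      principal_utility entry_game \<sigma> < principal_utility entry_game \<sigma>'"
    using stable_entry_policy principal_utility_entry_policy by auto
qed (simp_all add: valid_instance_entry_game)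

end
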